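(* For every point set $X$ that is a permutation, $\mathrm{cGB}(X)\le \mathrm{WB}(X)+\mathrm{WB}'(X)$.
   Context: $X$ is a set of $n$ points that is a permutation, with $x$-coordinates $\{1,\dots,n\}$ and $y$-coordinates $\{1,\dots,n\}$; $B$ is a bounding box of $X$. Let $\mathcal L^V$ ($\mathcal L^H$) be the vertical (horizontal) lines with half-integral coordinate between $1/2$ and $n-1/2$. $\mathrm{WB}(X)$: for an ordering $\sigma$ of $\mathcal L^V$, process lines in order starting from $\{B\}$; each line $L$ splits the current vertical strip $S$ containing it and is charged the number of pairs of points of $X\cap S$ consecutive in increasing $y$-order that lie on opposite sides of $L$; $\mathrm{WB}_\sigma(X)$ is the total charge and $\mathrm{WB}(X)=\max_\sigma\mathrm{WB}_\sigma(X)$. $\mathrm{WB}'(X)$ is defined symmetrically with horizontal lines: for orderings of $\mathcal L^H$, each line splits the current horizontal strip containing it and is charged the number of pairs of points of the strip consecutive in increasing $x$-order lying on opposite sides; maximize over orderings (equivalently, $\mathrm{WB}'(X)=\mathrm{WB}$ of $X$ rotated by $90^\circ$). $\mathrm{cGB}(X)$: for an ordering $\sigma$ of $\mathcal L^V\cup\mathcal L^H$, start with $\mathcal P=\{B\}$ and process lines in order; when $L$ is processed every rectangle $P\in\mathcal P$ intersecting $L$ is replaced by the two rectangles into which $L$ splits it, costing the number of pairs of points of $X\cap P$ consecutive in increasing $y$-order (if $L$ vertical) or in increasing $x$-order (if $L$ horizontal) lying on opposite sides of $L$. $\mathrm{cGB}_\sigma(X)$ is the total cost and $\mathrm{cGB}(X)=\max_\sigma\mathrm{cGB}_\sigma(X)$.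 *)

theory Defs
  imports Main
begin

definition is_perm_set :: "nat \<Rightarrow> (nat \<times> nat) set \<Rightarrow> bool" where
  "is_perm_set n X \<longleftrightarrow> card X = n \<and> fst ` X = {1..n} \<and> snd ` X = {1..n}"

text \<open>Lines: VL k is the vertical line x = k - 1/2, HL k the horizontal line y = k - 1/2.\<close>
datatype line = VL nat | HL nat

definition linesV :: "nat \<Rightarrow> line set" where
  "linesV n = VL ` {1..n}"

definition linesH :: "nat \<Rightarrow> line set" where
  "linesH n = HL ` {1..n}"

fun same_side :: "line \<Rightarrow> nat \<times> nat \<Rightarrow> nat \<times> nat \<Rightarrow> bool" where
  "same_side (VL k) p q = (fst p < k \<longleftrightarrow> fst q < k)"
| "same_side (HL k) p q = (snd p < k \<longleftrightarrow> snd q < k)"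

text \<open>Point contents of the (nonempty) rectangles of the partition induced by the
  already processed lines D.\<close>
definition cells :: "(nat \<times> nat) set \<Rightarrow> line set \<Rightarrow> (nat \<times> nat) set set" where
  "cells X D = (\<lambda>p. {q \<in> X. \<forall>l \<in> D. same_side l p q}) ` X"

fun sep :: "(nat \<times> nat) set \<Rightarrow> line \<Rightarrow> nat" where
  "sep P (VL k) = card {(p, q). p \<in> P \<and> q \<in> P \<and> snd p < snd q \<and>
        \<not> (\<exists>r \<in> P. snd p < snd r \<and> snd r < snd q) \<and> \<not> same_side (VL k) p q}"
| "sep P (HL k) = card {(p, q). p \<in> P \<and> q \<in> P \<and> fst p < fst q \<and>
        \<not> (\<exists>r \<in> P. fst p < fst r \<and> fst r < fst q) \<and> \<not> same_side (HL k) p q}"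

text \<open>Cost of processing line L when lines D were processed before: every rectangle
  is split (rectangles not meeting L have all points on one side and cost 0).\<close>
definition step_cost :: "(nat \<times> nat) set \<Rightarrow> line set \<Rightarrow> line \<Rightarrow> nat" where
  "step_cost X D L = (\<Sum>P \<in> cells X D. sep P L)"

definition order_cost :: "(nat \<times> nat) set \<Rightarrow> line list \<Rightarrow> nat" where
  "order_cost X \<sigma> = (\<Sum>i < length \<sigma>. step_cost X (set (take i \<sigma>)) (\<sigma> ! i))"

definition max_cost :: "(nat \<times> nat) set \<Rightarrow> line set \<Rightarrow> nat" where
  "max_cost X Ls = Max {order_cost X \<sigma> | \<sigma>. distinct \<sigma> \<and> set \<sigma> = Ls}"

text \<open>With only vertical (resp. horizontal) lines, the cells are exactly the strips.\<close>
definition WB :: "nat \<Rightarrow> (nat \<times> nat) set \<Rightarrow> nat" where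
  "WB n X = max_cost X (linesV n)"

definition WB' :: "nat \<Rightarrow> (nat \<times> nat) set \<Rightarrow> nat" where
  "WB' n X = max_cost X (linesH n)"

definition cGB :: "nat \<Rightarrow> (nat \<times> nat) set \<Rightarrow> nat" where
  "cGB n X = max_cost X (linesV n \<union> linesH n)"

end

theory Submission
  imports Defs
begin

text \<open>Take an optimal order \<sigma> for cGB and split it into its vertical and its horizontal
  subsequence. A vertical line costs the consecutive (in y-order) pairs it separates inside
  the current cells; the horizontal lines processed earlier only refine the vertical strips,
  and a pair that is y-consecutive inside a refined cell is still y-consecutive inside its
  strip, because a point whose y-coordinate lies between theirs cannot be cut off from
  them by a horizontal line. So every vertical line costs at most what it costs in the
  vertical subsequence alone, which is an admissible order for WB; symmetrically for the
  horizontal lines and WB'.\<close>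

fun vertical :: "line \<Rightarrow> bool" where
  "vertical (VL _) = True"
| "vertical (HL _) = False"

fun sweep_coord :: "line \<Rightarrow> nat \<times> nat \<Rightarrow> nat" where
  "sweep_coord (VL _) = snd"
| "sweep_coord (HL _) = fst"

definition split_pairs :: "(nat \<times> nat) set \<Rightarrow> line \<Rightarrow> ((nat \<times> nat) \<times> (nat \<times> nat)) set" where
  "split_pairs P L = {(p, q). p \<in> P \<and> q \<in> P \<and> sweep_coord L p < sweep_coord L q \<and>
     \<not> (\<exists>r \<in> P. sweep_coord L p < sweep_coord L r \<and> sweep_coord L r < sweep_coord L q) \<and>
     \<not> same_side L p q}"

definition cell_of :: "(nat \<times> nat) set \<Rightarrow> line set \<Rightarrow> nat \<times> nat \<Rightarrow> (nat \<times> nat) set" where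
  "cell_of X D p = {q \<in> X. \<forall>l \<in> D. same_side l p q}"

lemma sep_eq_card_split_pairs: "sep P L = card (split_pairs P L)"
  by (cases L) (simp_all add: split_pairs_def)

lemma cells_eq_image_cell_of: "cells X D = cell_of X D ` X"
  by (simp add: cells_def cell_of_def)

lemma same_side_refl: "same_side l p p"
  by (cases l) auto

lemma same_side_trans: "same_side l a b \<Longrightarrow> same_side l a c = same_side l b c"
  by (cases l) auto

lemma same_side_between:
  assumes "vertical l \<noteq> vertical L"
    and "sweep_coord L p < sweep_coord L r" "sweep_coord L r < sweep_coord L q"
    and "same_side l p q"
  shows "same_side l p r"
  using assms by (cases l; cases L) auto

lemma cell_of_eq: "p \<in> cell_of X D a \<Longrightarrow> cell_of X D p = cell_of X D a"
  unfolding cell_of_def using same_side_trans by blast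

lemma split_pairs_subset: "split_pairs P L \<subseteq> P \<times> P"
  by (auto simp: split_pairs_def)

lemma step_cost_eq_card_Union:
  assumes "finite X"
  shows "step_cost X D L = card (\<Union>P \<in> cells X D. split_pairs P L)"
proof -
  have "finite (cells X D)"
    using assms by (simp add: cells_eq_image_cell_of)
  moreover have "finite (split_pairs P L)" if "P \<in> cells X D" for P
  proof -
    have "P \<subseteq> X" using that by (auto simp: cells_eq_image_cell_of cell_of_def)
    then show ?thesis
      using split_pairs_subset[of P L] assms by (meson finite_SigmaI finite_subset)
  qed
  moreover have "split_pairs P L \<inter> split_pairs P' L = {}"
    if "P \<in> cells X D" "P' \<in> cells X D" "P \<noteq> P'" for P P'
  proof (rule ccontr)
    assume "split_pairs P L \<inter> split_pairs P' L \<noteq> {}"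
    then obtain p q where "(p, q) \<in> split_pairs P L" "(p, q) \<in> split_pairs P' L" by auto
    then have "p \<in> P" "p \<in> P'" by (auto simp: split_pairs_def)
    then show False using that cell_of_eq unfolding cells_eq_image_cell_of by (metis imageE)
  qed
  ultimately show ?thesis
    unfolding step_cost_def sep_eq_card_split_pairs by (simp add: card_UN_disjoint)
qed

lemma split_pairs_coarser_cell:
  assumes "D' \<subseteq> D" and crossing: "\<forall>l \<in> D - D'. vertical l \<noteq> vertical L"
    and pq: "(p, q) \<in> split_pairs (cell_of X D a) L"
  shows "(p, q) \<in> split_pairs (cell_of X D' p) L"
proof -
  let ?k = "sweep_coord L"
  have p: "p \<in> X" "\<forall>l \<in> D. same_side l a p"
    and q: "q \<in> X" "\<forall>l \<in> D. same_side l a q"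
    and pq_order: "?k p < ?k q" "\<not> same_side L p q"
    and nothing_between: "\<not> (\<exists>r \<in> cell_of X D a. ?k p < ?k r \<and> ?k r < ?k q)"
    using pq by (auto simp: split_pairs_def cell_of_def)
  have same_cell: "\<forall>l \<in> D. same_side l p q"
    using p q same_side_trans by blast
  have "r \<in> cell_of X D a" if r: "r \<in> cell_of X D' p" "?k p < ?k r" "?k r < ?k q" for r
    unfolding cell_of_def
  proof (intro CollectI conjI ballI)
    show "r \<in> X" using r by (simp add: cell_of_def)
  next
    fix l assume "l \<in> D"
    then have "same_side l p r"
      using r crossing same_cell same_side_between[of l L p r q]
      by (cases "l \<in> D'") (auto simp: cell_of_def)
    then show "same_side l a r" using p \<open>l \<in> D\<close> same_side_trans by blast
  qed
  then have "\<not> (\<exists>r \<in> cell_of X D' p. ?k p < ?k r \<and> ?k r < ?k q)"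
    using nothing_between by blast
  then show ?thesis
    using p q same_cell pq_order \<open>D' \<subseteq> D\<close>
    by (auto simp: split_pairs_def cell_of_def same_side_refl)
qed

lemma step_cost_antimono:
  assumes "finite X" and "D' \<subseteq> D" and "\<forall>l \<in> D - D'. vertical l \<noteq> vertical L"
  shows "step_cost X D L \<le> step_cost X D' L"
proof -
  have "(\<Union>P \<in> cells X D. split_pairs P L) \<subseteq> (\<Union>P \<in> cells X D'. split_pairs P L)"
  proof
    fix x assume "x \<in> (\<Union>P \<in> cells X D. split_pairs P L)"
    then obtain a where "x \<in> split_pairs (cell_of X D a) L"
      by (auto simp: cells_eq_image_cell_of)
    moreover obtain p q where x: "x = (p, q)" by (cases x)
    ultimately have "(p, q) \<in> split_pairs (cell_of X D a) L" "p \<in> X"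
      by (auto simp: split_pairs_def cell_of_def)
    then show "x \<in> (\<Union>P \<in> cells X D'. split_pairs P L)"
      using x split_pairs_coarser_cell[OF assms(2,3), of p q X a]
      by (auto simp: cells_eq_image_cell_of)
  qed
  moreover have "(\<Union>P \<in> cells X D'. split_pairs P L) \<subseteq> X \<times> X"
    using split_pairs_subset by (fastforce simp: cells_eq_image_cell_of cell_of_def)
  ultimately show ?thesis
    using assms(1) by (simp add: step_cost_eq_card_Union card_mono finite_subset)
qed

fun cost_after :: "(nat \<times> nat) set \<Rightarrow> line set \<Rightarrow> line list \<Rightarrow> nat" where
  "cost_after X D [] = 0"
| "cost_after X D (L # \<sigma>) = step_cost X D L + cost_after X (insert L D) \<sigma>"

lemma cost_after_eq_sum:
  "cost_after X D \<sigma> = (\<Sum>i < length \<sigma>. step_cost X (D \<union> set (take i \<sigma>)) (\<sigma> ! i))"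
proof (induction \<sigma> arbitrary: D)
  case Nil
  then show ?case by simp
next
  case (Cons L \<sigma>)
  show ?case
    unfolding cost_after.simps Cons.IH length_Cons sum.lessThan_Suc_shift by simp
qed

lemma order_cost_eq_cost_after: "order_cost X \<sigma> = cost_after X {} \<sigma>"
  by (simp add: order_cost_def cost_after_eq_sum)

lemma cost_after_le_split:
  assumes "finite X"
  shows "cost_after X D \<sigma> \<le> cost_after X {l \<in> D. vertical l} (filter vertical \<sigma>)
           + cost_after X {l \<in> D. \<not> vertical l} (filter (\<lambda>l. \<not> vertical l) \<sigma>)"
proof (induction \<sigma> arbitrary: D)
  case Nil
  then show ?case by simp
next
  case (Cons L \<sigma>)
  let ?D = "{l \<in> D. vertical l = vertical L}"
  have "step_cost X D L \<le> step_cost X ?D L"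
    by (rule step_cost_antimono[OF assms]) auto
  moreover have "{l \<in> insert L D. vertical l = vertical L} = insert L ?D"
    and "{l \<in> insert L D. vertical l \<noteq> vertical L} = {l \<in> D. vertical l \<noteq> vertical L}"
    by auto
  ultimately show ?case
    using Cons.IH[of "insert L D"] by (cases "vertical L") simp_all
qed

lemma finite_order_costs:
  assumes "finite Ls"
  shows "finite {order_cost X \<sigma> | \<sigma>. distinct \<sigma> \<and> set \<sigma> = Ls}"
proof -
  have "{\<sigma>. distinct \<sigma> \<and> set \<sigma> = Ls} \<subseteq> {\<sigma>. set \<sigma> \<subseteq> Ls \<and> length \<sigma> \<le> card Ls}"
    using distinct_card by fastforce
  then have "finite {\<sigma>. distinct \<sigma> \<and> set \<sigma> = Ls}"
    using finite_lists_length_le[OF assms] by (rule finite_subset)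
  then have "finite (order_cost X ` {\<sigma>. distinct \<sigma> \<and> set \<sigma> = Ls})" by simp
  then show ?thesis by (simp add: setcompr_eq_image)
qed

lemma order_cost_le_max_cost:
  "finite Ls \<Longrightarrow> distinct \<sigma> \<Longrightarrow> set \<sigma> = Ls \<Longrightarrow> order_cost X \<sigma> \<le> max_cost X Ls"
  unfolding max_cost_def by (rule Max_ge[OF finite_order_costs]) auto

lemma max_cost_attained:
  assumes "finite Ls"
  obtains \<sigma> where "distinct \<sigma>" "set \<sigma> = Ls" "max_cost X Ls = order_cost X \<sigma>"
proof -
  obtain \<sigma> where "distinct \<sigma>" "set \<sigma> = Ls" using finite_distinct_list[OF assms] by blast
  then have "{order_cost X \<sigma> | \<sigma>. distinct \<sigma> \<and> set \<sigma> = Ls} \<noteq> {}" by blast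
  then show ?thesis
    using Max_in[OF finite_order_costs[OF assms]] that unfolding max_cost_def by blast
qed

lemma max_cost_union_le:
  assumes "finite X" "finite A" "finite B"
    and "\<forall>l \<in> A. vertical l" "\<forall>l \<in> B. \<not> vertical l"
  shows "max_cost X (A \<union> B) \<le> max_cost X A + max_cost X B"
proof -
  obtain \<sigma> where \<sigma>: "distinct \<sigma>" "set \<sigma> = A \<union> B" and opt: "max_cost X (A \<union> B) = order_cost X \<sigma>"
    using max_cost_attained assms(2,3) by (metis finite_UnI)
  have A: "set (filter vertical \<sigma>) = A" and B: "set (filter (\<lambda>l. \<not> vertical l) \<sigma>) = B"
    using \<sigma>(2) assms(4,5) by auto
  have "max_cost X (A \<union> B) \<le> order_cost X (filter vertical \<sigma>)
                                + order_cost X (filter (\<lambda>l. \<not> vertical l) \<sigma>)"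
    using opt cost_after_le_split[OF assms(1), of "{}" \<sigma>] by (simp add: order_cost_eq_cost_after)
  also have "\<dots> \<le> max_cost X A + max_cost X B"
    using order_cost_le_max_cost[OF assms(2) _ A] order_cost_le_max_cost[OF assms(3) _ B] \<sigma>(1)
    by (simp add: add_mono)
  finally show ?thesis .
qed

lemma finite_if_is_perm_set: "is_perm_set n X \<Longrightarrow> finite X"
  unfolding is_perm_set_def by (metis finite_SigmaI finite_atLeastAtMost finite_subset subset_fst_snd)

theorem lemma5p2:
  fixes n :: nat and X :: "(nat \<times> nat) set"
  assumes "is_perm_set n X"
  shows "cGB n X \<le> WB n X + WB' n X"
  unfolding cGB_def WB_def WB'_def
  using max_cost_union_le finite_if_is_perm_set[OF assms]
  by (simp add: linesV_def linesH_def)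

end
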